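(* For a restless bandit as in the context, every $i\in N$ and $S\subseteq N^{\{0,1\}}$: $$b^{S\cup\{j\}}_i=b^S_i+w^S_j\,x^{1,S\cup\{j\}}_{ij},\quad j\in N^{\{0,1\}}\setminus S;\qquad b^S_i=b^{S\setminus\{j\}}_i+w^S_j\,x^{0,S\setminus\{j\}}_{ij},\quad j\in S.$$
   Context: Restless bandit: finite state space $N=N^{\{0,1\}}\cup N^{\{1\}}$ (disjoint); actions $a\in\{0,1\}$; transition probabilities $p^a_{ij}$ with $p^1_{ij}=p^0_{ij}$ for $i\in N^{\{1\}}$; discount factor $\beta\in(0,1)$; activity weights $\theta^1_j>0$. Stationary policies $u:N\to[0,1]$ with $u(i)=1$ on $N^{\{1\}}$. $b^u_i=E^u_i[\sum_{t\ge0}\theta^1_{X(t)}a(t)\beta^t]$, $x^{a,u}_{ij}=E^u_i[\sum_{t\ge0}1\{X(t)=j,a(t)=a\}\beta^t]$. For $S\subseteq N^{\{0,1\}}$ the $S$-active policy is active on $S\cup N^{\{1\}}$ and passive elsewhere; superscript $S$ denotes its measures. Marginal workloads: $w^S_i=\theta^1_i1\{i\in N^{\{0,1\}}\}+\beta\sum_{j}(p^1_{ij}-p^0_{ij})b^S_j$. *)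

theory Defs
  imports Complex_Main
begin

(* State space N = UNIV of a finite type 'i; N^{0,1} = N01, N^{1} = - N01.
   Actions are encoded as nat 0 / 1; p a i j is the transition probability p^a_ij. *)

definition trans_pol :: "(nat \<Rightarrow> 'i \<Rightarrow> 'i \<Rightarrow> real) \<Rightarrow> ('i \<Rightarrow> real) \<Rightarrow> 'i \<Rightarrow> 'i \<Rightarrow> real" where
  "trans_pol p u i j = (1 - u i) * p 0 i j + u i * p 1 i j"

fun kstep :: "('i::finite \<Rightarrow> 'i \<Rightarrow> real) \<Rightarrow> nat \<Rightarrow> 'i \<Rightarrow> 'i \<Rightarrow> real" where
  "kstep P 0 i j = (if i = j then 1 else 0)"
| "kstep P (Suc n) i j = (\<Sum>k\<in>UNIV. P i k * kstep P n k j)"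

definition act_prob :: "('i \<Rightarrow> real) \<Rightarrow> nat \<Rightarrow> 'i \<Rightarrow> real" where
  "act_prob u a j = (if a = 1 then u j else 1 - u j)"

(* x^{a,u}_{ij} = E^u_i [ sum_t 1{X(t)=j, a(t)=a} beta^t ] *)
definition occ :: "(nat \<Rightarrow> 'i::finite \<Rightarrow> 'i \<Rightarrow> real) \<Rightarrow> real \<Rightarrow> ('i \<Rightarrow> real) \<Rightarrow> nat \<Rightarrow> 'i \<Rightarrow> 'i \<Rightarrow> real" where
  "occ p \<beta> u a i j = (\<Sum>t. \<beta> ^ t * kstep (trans_pol p u) t i j * act_prob u a j)"

(* b^u_i = E^u_i [ sum_t theta^1_{X(t)} a(t) beta^t ] *)
definition work :: "(nat \<Rightarrow> 'i::finite \<Rightarrow> 'i \<Rightarrow> real) \<Rightarrow> real \<Rightarrow> ('i \<Rightarrow> real) \<Rightarrow> ('i \<Rightarrow> real) \<Rightarrow> 'i \<Rightarrow> real" where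
  "work p \<beta> \<theta> u i = (\<Sum>j\<in>UNIV. \<theta> j * occ p \<beta> u 1 i j)"

definition act_pol :: "'i set \<Rightarrow> 'i set \<Rightarrow> 'i \<Rightarrow> real" where
  "act_pol N01 S j = (if j \<in> S \<or> j \<notin> N01 then 1 else 0)"

definition mwork :: "(nat \<Rightarrow> 'i::finite \<Rightarrow> 'i \<Rightarrow> real) \<Rightarrow> real \<Rightarrow> ('i \<Rightarrow> real) \<Rightarrow> 'i set \<Rightarrow> 'i set \<Rightarrow> 'i \<Rightarrow> real" where
  "mwork p \<beta> \<theta> N01 S i =
     (if i \<in> N01 then \<theta> i else 0)
     + \<beta> * (\<Sum>j\<in>UNIV. (p 1 i j - p 0 i j) * work p \<beta> \<theta> (act_pol N01 S) j)"

end

theory Submission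
  imports Defs
begin

text \<open>
  Let \<open>G\<^sub>u = \<Sum>\<^sub>t \<beta>\<^sup>t P\<^sub>u\<^sup>t\<close> be the discounted resolvent of the chain under policy \<open>u\<close>.
  Then \<open>b\<^sup>u = G\<^sub>u (\<theta> u)\<close> solves the Bellman equation \<open>b\<^sup>u = \<theta> u + \<beta> P\<^sub>u b\<^sup>u\<close>, whose
  solution is unique because \<open>\<beta> P\<^sub>u\<close> is a sup-norm contraction. Subtracting the Bellman
  equations of two policies shows that \<open>b\<^sup>v - b\<^sup>u\<close> solves the equation of \<open>v\<close> with source
  \<open>\<theta> (v - u) + \<beta> (P\<^sub>v - P\<^sub>u) b\<^sup>u\<close>, hence equals \<open>G\<^sub>v\<close> applied to that source. When \<open>u\<close>
  and \<open>v\<close> differ only in state \<open>j\<close>, the source is \<open>(v j - u j) w\<^sup>u\<^sub>j\<close> at \<open>j\<close> and zero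
  elsewhere, and \<open>G\<^sub>v i j\<close> is the discounted occupation of \<open>j\<close> under the action \<open>v\<close> takes there.
\<close>

definition stochastic :: "('i::finite \<Rightarrow> 'i \<Rightarrow> real) \<Rightarrow> bool" where
  "stochastic P \<longleftrightarrow> (\<forall>i k. 0 \<le> P i k) \<and> (\<forall>i. (\<Sum>k\<in>UNIV. P i k) = 1)"

definition resolvent :: "('i::finite \<Rightarrow> 'i \<Rightarrow> real) \<Rightarrow> real \<Rightarrow> 'i \<Rightarrow> 'i \<Rightarrow> real" where
  "resolvent P \<beta> i j = (\<Sum>t. \<beta> ^ t * kstep P t i j)"

lemma kstep_nonneg:
  assumes "stochastic P"
  shows "0 \<le> kstep P n i j"
  using assms unfolding stochastic_def
  by (induction n arbitrary: i) (auto intro!: sum_nonneg mult_nonneg_nonneg)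

lemma kstep_row_sum:
  assumes "stochastic P"
  shows "(\<Sum>j\<in>UNIV. kstep P n i j) = 1"
proof (induction n arbitrary: i)
  case 0
  then show ?case by simp
next
  case (Suc n)
  have "(\<Sum>j\<in>UNIV. kstep P (Suc n) i j) = (\<Sum>k\<in>UNIV. P i k * (\<Sum>j\<in>UNIV. kstep P n k j))"
    by (simp only: kstep.simps sum_distrib_left) (rule sum.swap)
  also have "\<dots> = 1"
    using Suc assms by (simp add: stochastic_def)
  finally show ?case .
qed

lemma kstep_le_one:
  assumes "stochastic P"
  shows "kstep P n i j \<le> 1"
proof -
  have "kstep P n i j \<le> (\<Sum>j\<in>UNIV. kstep P n i j)"
    using kstep_nonneg[OF assms] by (intro member_le_sum) auto
  then show ?thesis
    by (simp add: kstep_row_sum[OF assms])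
qed

lemma summable_discounted_kstep:
  assumes "stochastic P" "0 \<le> \<beta>" "\<beta> < 1"
  shows "summable (\<lambda>t. \<beta> ^ t * kstep P t i j)"
proof (rule summable_comparison_test)
  show "\<exists>N. \<forall>t\<ge>N. norm (\<beta> ^ t * kstep P t i j) \<le> \<beta> ^ t"
    using kstep_nonneg[OF assms(1)] kstep_le_one[OF assms(1)] assms(2)
    by (auto simp: abs_mult intro!: mult_left_le)
  show "summable (\<lambda>t. \<beta> ^ t)"
    using assms by (intro summable_geometric) auto
qed

lemma resolvent_eq:
  assumes "stochastic P" "0 \<le> \<beta>" "\<beta> < 1"
  shows "resolvent P \<beta> i j = (if i = j then 1 else 0) + \<beta> * (\<Sum>k\<in>UNIV. P i k * resolvent P \<beta> k j)"
proof -
  note summable = summable_discounted_kstep[OF assms]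
  have "resolvent P \<beta> i j - (if i = j then 1 else 0) = (\<Sum>t. \<beta> ^ Suc t * kstep P (Suc t) i j)"
    unfolding resolvent_def using suminf_split_head[OF summable] by simp
  also have "\<dots> = (\<Sum>t. \<Sum>k\<in>UNIV. \<beta> * P i k * (\<beta> ^ t * kstep P t k j))"
    by (simp add: sum_distrib_left mult_ac)
  also have "\<dots> = (\<Sum>k\<in>UNIV. \<Sum>t. \<beta> * P i k * (\<beta> ^ t * kstep P t k j))"
    by (rule suminf_sum) (intro summable_mult summable)
  also have "\<dots> = \<beta> * (\<Sum>k\<in>UNIV. P i k * resolvent P \<beta> k j)"
    unfolding resolvent_def sum_distrib_left
    by (intro sum.cong refl) (simp add: suminf_mult summable mult.assoc)
  finally show ?thesis
    by simp
qed

lemma resolvent_apply_eq: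
  assumes "stochastic P" "0 \<le> \<beta>" "\<beta> < 1"
  shows "(\<Sum>m\<in>UNIV. resolvent P \<beta> k m * d m)
           = d k + \<beta> * (\<Sum>l\<in>UNIV. P k l * (\<Sum>m\<in>UNIV. resolvent P \<beta> l m * d m))"
proof -
  have "(\<Sum>m\<in>UNIV. resolvent P \<beta> k m * d m)
      = (\<Sum>m\<in>UNIV. ((if k = m then 1 else 0) + \<beta> * (\<Sum>l\<in>UNIV. P k l * resolvent P \<beta> l m)) * d m)"
    by (subst resolvent_eq[OF assms]) (rule refl)
  also have "\<dots> = (\<Sum>m\<in>UNIV. (if k = m then d m else 0))
      + (\<Sum>m\<in>UNIV. \<Sum>l\<in>UNIV. \<beta> * (P k l * (resolvent P \<beta> l m * d m)))"
    unfolding sum.distrib[symmetric]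
    by (intro sum.cong refl) (simp add: distrib_left distrib_right sum_distrib_left sum_distrib_right mult_ac)
  also have "\<dots> = d k + \<beta> * (\<Sum>l\<in>UNIV. P k l * (\<Sum>m\<in>UNIV. resolvent P \<beta> l m * d m))"
    by (subst sum.swap) (simp add: sum_distrib_left)
  finally show ?thesis .
qed

lemma discounted_solution_unique:
  assumes "stochastic P" "0 \<le> \<beta>" "\<beta> < 1"
    and f: "\<And>k. f k = d k + \<beta> * (\<Sum>l\<in>UNIV. P k l * f l)"
    and g: "\<And>k. g k = d k + \<beta> * (\<Sum>l\<in>UNIV. P k l * g l)"
  shows "f i = g i"
proof -
  define e where "e k = f k - g k" for k
  have e: "e k = \<beta> * (\<Sum>l\<in>UNIV. P k l * e l)" for k
    unfolding e_def by (subst f, subst g) (simp add: algebra_simps sum_subtractf)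
  define M where "M = Max (range (\<lambda>l. \<bar>e l\<bar>))"
  have le_M: "\<bar>e l\<bar> \<le> M" for l
    unfolding M_def by (rule Max_ge) auto
  have "\<bar>e k\<bar> \<le> \<beta> * M" for k
  proof -
    have "\<bar>e k\<bar> = \<beta> * \<bar>\<Sum>l\<in>UNIV. P k l * e l\<bar>"
      using e[of k] assms(2) by (simp add: abs_mult)
    also have "\<dots> \<le> \<beta> * (\<Sum>l\<in>UNIV. \<bar>P k l * e l\<bar>)"
      using assms(2) by (intro mult_left_mono sum_abs)
    also have "\<dots> \<le> \<beta> * (\<Sum>l\<in>UNIV. P k l * M)"
      using assms(1,2) le_M unfolding stochastic_def
      by (intro mult_left_mono sum_mono) (simp_all add: abs_mult mult_left_mono)
    also have "\<dots> = \<beta> * M"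
      using assms(1) by (simp add: stochastic_def sum_distrib_right[symmetric])
    finally show ?thesis .
  qed
  then have "M \<le> \<beta> * M"
    unfolding M_def by (subst Max_le_iff) auto
  moreover have "0 \<le> M"
    using le_M[of i] by simp
  ultimately have "M = 0"
    using assms(3) by (metis antisym mult_le_cancel_right1 not_le)
  then show ?thesis
    using le_M[of i] by (simp add: e_def)
qed

lemma stochastic_trans_pol:
  assumes "\<And>a i j. a \<in> {0, 1} \<Longrightarrow> 0 \<le> p a i j"
    and "\<And>a i. a \<in> {0, 1} \<Longrightarrow> (\<Sum>j\<in>UNIV. p a i j) = 1"
    and "\<And>k. 0 \<le> u k \<and> u k \<le> 1"
  shows "stochastic (trans_pol p u)"
  unfolding stochastic_def trans_pol_def
proof (intro conjI allI)
  fix i k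
  show "0 \<le> (1 - u i) * p 0 i k + u i * p 1 i k"
    using assms(1)[of 0 i k] assms(1)[of 1 i k] assms(3)[of i] by simp
next
  fix i
  show "(\<Sum>k\<in>UNIV. (1 - u i) * p 0 i k + u i * p 1 i k) = 1"
    using assms(2)[of 0 i] assms(2)[of 1 i]
    by (simp add: sum.distrib sum_distrib_left[symmetric])
qed

lemma trans_pol_diff:
  "trans_pol p v k l - trans_pol p u k l = (v k - u k) * (p 1 k l - p 0 k l)"
  by (simp add: trans_pol_def algebra_simps)

lemma occ_eq_resolvent:
  assumes "stochastic (trans_pol p u)" "0 \<le> \<beta>" "\<beta> < 1"
  shows "occ p \<beta> u a i j = resolvent (trans_pol p u) \<beta> i j * act_prob u a j"
  unfolding occ_def resolvent_def
  by (rule suminf_mult2[symmetric]) (rule summable_discounted_kstep[OF assms])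

lemma work_eq_resolvent:
  assumes "stochastic (trans_pol p u)" "0 \<le> \<beta>" "\<beta> < 1"
  shows "work p \<beta> \<theta> u i = (\<Sum>j\<in>UNIV. resolvent (trans_pol p u) \<beta> i j * (\<theta> j * u j))"
  unfolding work_def by (simp add: occ_eq_resolvent[OF assms] act_prob_def mult_ac)

lemma work_bellman:
  assumes "stochastic (trans_pol p u)" "0 \<le> \<beta>" "\<beta> < 1"
  shows "work p \<beta> \<theta> u i = \<theta> i * u i + \<beta> * (\<Sum>l\<in>UNIV. trans_pol p u i l * work p \<beta> \<theta> u l)"
  unfolding work_eq_resolvent[OF assms] by (rule resolvent_apply_eq[OF assms])

lemma work_difference:
  assumes u: "stochastic (trans_pol p u)" and v: "stochastic (trans_pol p v)"
    and "0 \<le> \<beta>" "\<beta> < 1"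
  shows "work p \<beta> \<theta> v i - work p \<beta> \<theta> u i =
    (\<Sum>k\<in>UNIV. resolvent (trans_pol p v) \<beta> i k *
       (\<theta> k * (v k - u k) + \<beta> * (\<Sum>l\<in>UNIV. (trans_pol p v k l - trans_pol p u k l) * work p \<beta> \<theta> u l)))"
  (is "_ = (\<Sum>k\<in>UNIV. resolvent ?Pv \<beta> i k * ?d k)")
proof (rule discounted_solution_unique[OF v assms(3,4)])
  fix k
  show "work p \<beta> \<theta> v k - work p \<beta> \<theta> u k
      = ?d k + \<beta> * (\<Sum>l\<in>UNIV. ?Pv k l * (work p \<beta> \<theta> v l - work p \<beta> \<theta> u l))"
    by (subst work_bellman[OF v assms(3,4)], subst work_bellman[OF u assms(3,4)])
      (simp add: algebra_simps sum_subtractf sum.distrib)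
  show "(\<Sum>m\<in>UNIV. resolvent ?Pv \<beta> k m * ?d m)
      = ?d k + \<beta> * (\<Sum>l\<in>UNIV. ?Pv k l * (\<Sum>m\<in>UNIV. resolvent ?Pv \<beta> l m * ?d m))"
    by (rule resolvent_apply_eq[OF v assms(3,4)])
qed

lemma work_single_state_change:
  assumes u: "stochastic (trans_pol p u)" and v: "stochastic (trans_pol p v)"
    and "0 \<le> \<beta>" "\<beta> < 1"
    and same: "\<And>k. k \<noteq> j \<Longrightarrow> v k = u k"
  shows "work p \<beta> \<theta> v i - work p \<beta> \<theta> u i =
    resolvent (trans_pol p v) \<beta> i j * (v j - u j) *
      (\<theta> j + \<beta> * (\<Sum>l\<in>UNIV. (p 1 j l - p 0 j l) * work p \<beta> \<theta> u l))"
proof -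
  have source: "\<theta> k * (v k - u k) + \<beta> * (\<Sum>l\<in>UNIV. (trans_pol p v k l - trans_pol p u k l) * work p \<beta> \<theta> u l)
      = (if k = j then (v j - u j) * (\<theta> j + \<beta> * (\<Sum>l\<in>UNIV. (p 1 j l - p 0 j l) * work p \<beta> \<theta> u l)) else 0)"
    for k
    using same[of k] unfolding trans_pol_diff
    by (simp add: sum_distrib_left algebra_simps)
  show ?thesis
    unfolding work_difference[OF u v assms(3,4)] source
    by (simp add: if_distrib mult.assoc cong: if_cong)
qed

lemma stochastic_act_pol:
  assumes "\<And>a i j. a \<in> {0, 1} \<Longrightarrow> 0 \<le> p a i j"
    and "\<And>a i. a \<in> {0, 1} \<Longrightarrow> (\<Sum>j\<in>UNIV. p a i j) = 1"
  shows "stochastic (trans_pol p (act_pol N01 S))"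
  by (rule stochastic_trans_pol[OF assms]) (auto simp: act_pol_def)

theorem corollary1:
  fixes p :: "nat \<Rightarrow> 'i::finite \<Rightarrow> 'i \<Rightarrow> real"
    and \<beta> :: real and \<theta> :: "'i \<Rightarrow> real" and N01 :: "'i set"
  assumes p_nonneg: "\<And>a i j. a \<in> {0, 1} \<Longrightarrow> p a i j \<ge> 0"
    and p_stoch: "\<And>a i. a \<in> {0, 1} \<Longrightarrow> (\<Sum>j\<in>UNIV. p a i j) = 1"
    and p_N1: "\<And>i j. i \<notin> N01 \<Longrightarrow> p 1 i j = p 0 i j"
    and beta: "0 < \<beta>" "\<beta> < 1"
    and theta: "\<And>j. \<theta> j > 0"
    and S: "S \<subseteq> N01"
  shows "(\<forall>j \<in> N01 - S.
            work p \<beta> \<theta> (act_pol N01 (S \<union> {j})) i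
              = work p \<beta> \<theta> (act_pol N01 S) i
                + mwork p \<beta> \<theta> N01 S j * occ p \<beta> (act_pol N01 (S \<union> {j})) 1 i j)
       \<and> (\<forall>j \<in> S.
            work p \<beta> \<theta> (act_pol N01 S) i
              = work p \<beta> \<theta> (act_pol N01 (S - {j})) i
                + mwork p \<beta> \<theta> N01 S j * occ p \<beta> (act_pol N01 (S - {j})) 0 i j)"
proof -
  have st: "stochastic (trans_pol p (act_pol N01 T))" for T
    by (rule stochastic_act_pol[OF p_nonneg p_stoch])
  have b0: "0 \<le> \<beta>"
    using beta(1) by simp
  note change = work_single_state_change[OF st st b0 beta(2)]
  note occ = occ_eq_resolvent[OF st b0 beta(2)]
  have mwork: "mwork p \<beta> \<theta> N01 S j
      = \<theta> j + \<beta> * (\<Sum>l\<in>UNIV. (p 1 j l - p 0 j l) * work p \<beta> \<theta> (act_pol N01 S) l)"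
    if "j \<in> N01" for j
    using that by (simp add: mwork_def)
  show ?thesis
  proof (intro conjI ballI)
    fix j assume j: "j \<in> N01 - S"
    have "work p \<beta> \<theta> (act_pol N01 (S \<union> {j})) i - work p \<beta> \<theta> (act_pol N01 S) i
        = resolvent (trans_pol p (act_pol N01 (S \<union> {j}))) \<beta> i j * 1 * mwork p \<beta> \<theta> N01 S j"
      using j by (subst change[where j = j]) (auto simp: act_pol_def mwork)
    then show "work p \<beta> \<theta> (act_pol N01 (S \<union> {j})) i
        = work p \<beta> \<theta> (act_pol N01 S) i + mwork p \<beta> \<theta> N01 S j * occ p \<beta> (act_pol N01 (S \<union> {j})) 1 i j"
      by (simp add: occ act_prob_def act_pol_def algebra_simps)
  next
    fix j assume j: "j \<in> S"
    have "work p \<beta> \<theta> (act_pol N01 (S - {j})) i - work p \<beta> \<theta> (act_pol N01 S) i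
        = resolvent (trans_pol p (act_pol N01 (S - {j}))) \<beta> i j * (- 1) * mwork p \<beta> \<theta> N01 S j"
      using j S by (subst change[where j = j]) (auto simp: act_pol_def mwork)
    then show "work p \<beta> \<theta> (act_pol N01 S) i
        = work p \<beta> \<theta> (act_pol N01 (S - {j})) i + mwork p \<beta> \<theta> N01 S j * occ p \<beta> (act_pol N01 (S - {j})) 0 i j"
      using j S by (auto simp: occ act_prob_def act_pol_def algebra_simps)
  qed
qed

end
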